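(* Let $c\ge 0$, $m\ge 2$, and let $x=((x^1,n_1),\dots,(x^q,n_q))$ be a non-convergent Nash equilibrium of the best-worst rule $s=(c,m)$. If $n_i=n_j=2$, $k$ is a candidate located at $x^i$ and $l$ is a candidate located at $x^j$, then $v_k(x)=v_l(x)$.
   Context: Setting: voters' ideal points are distributed uniformly (unit mass, Lebesgue measure) on $[0,1]$. There are $m$ candidates; a profile is $x=(x_1,\dots,x_m)\in[0,1]^m$. A voter with ideal point $y$ ranks candidates by distance $|x_i-y|$ (closer is better); ties are broken by a fair lottery (uniformly random strict order among tied candidates). Under the best-worst rule $s=(c,m)$ ($c\ge0$), a candidate receives $1$ point from each voter ranking her first, $-c$ from each voter ranking her last ($m$-th), and $0$ otherwise; $v_i(x)$ is candidate $i$'s expected total points. A (pure-strategy Nash) equilibrium is a profile $x^*$ with $v_i(x^* )\ge v_i(t,x^*_{-i})$ for all $i$ and $t\in[0,1]$ ($(t,x_{-i})$ is $x$ with $x_i$ replaced by $t$); it is non-convergent if at least two platforms are distinct. A profile determines its distinct occupied positions $x^1<\dots<x^q$, with $n_j$ the number of candidates at $x^j$; we write $x=((x^1,n_1),\dots,(x^q,n_q))$. *)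

theory Defs
  imports "HOL-Analysis.Analysis"
begin

text \<open>Candidates are indexed by 0..<m; a profile is x :: nat => real (only x i for i < m matter).\<close>

definition closest :: "nat \<Rightarrow> (nat \<Rightarrow> real) \<Rightarrow> real \<Rightarrow> nat set" where
  "closest m x y = {i. i < m \<and> (\<forall>j<m. \<bar>x i - y\<bar> \<le> \<bar>x j - y\<bar>)}"

definition farthest :: "nat \<Rightarrow> (nat \<Rightarrow> real) \<Rightarrow> real \<Rightarrow> nat set" where
  "farthest m x y = {i. i < m \<and> (\<forall>j<m. \<bar>x j - y\<bar> \<le> \<bar>x i - y\<bar>)}"

text \<open>Expected points candidate i gets from voter y under the best-worst rule (c,m),
  with ties broken by a uniformly random strict order among tied candidates:
  i is ranked first with probability 1/|closest| if i is closest, and ranked last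
  with probability 1/|farthest| if i is farthest.\<close>
definition bw_point :: "real \<Rightarrow> nat \<Rightarrow> (nat \<Rightarrow> real) \<Rightarrow> nat \<Rightarrow> real \<Rightarrow> real" where
  "bw_point c m x i y =
     (if i \<in> closest m x y then 1 / real (card (closest m x y)) else 0)
     - c * (if i \<in> farthest m x y then 1 / real (card (farthest m x y)) else 0)"

definition bw_score :: "real \<Rightarrow> nat \<Rightarrow> (nat \<Rightarrow> real) \<Rightarrow> nat \<Rightarrow> real" where
  "bw_score c m x i = (LINT y:{0..1}|lborel. bw_point c m x i y)"

definition is_profile :: "nat \<Rightarrow> (nat \<Rightarrow> real) \<Rightarrow> bool" where
  "is_profile m x \<longleftrightarrow> (\<forall>i<m. x i \<in> {0..1})"

definition nash_eq :: "real \<Rightarrow> nat \<Rightarrow> (nat \<Rightarrow> real) \<Rightarrow> bool" where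
  "nash_eq c m x \<longleftrightarrow> is_profile m x \<and>
     (\<forall>i<m. \<forall>t\<in>{0..1}. bw_score c m (x(i := t)) i \<le> bw_score c m x i)"

definition non_convergent :: "nat \<Rightarrow> (nat \<Rightarrow> real) \<Rightarrow> bool" where
  "non_convergent m x \<longleftrightarrow> (\<exists>i<m. \<exists>j<m. x i \<noteq> x j)"

definition n_at :: "nat \<Rightarrow> (nat \<Rightarrow> real) \<Rightarrow> real \<Rightarrow> nat" where
  "n_at m x p = card {i. i < m \<and> x i = p}"

end

theory Submission
  imports Defs
begin

text \<open>Let k and l sit at distinct positions, each shared with exactly one other candidate, and
  let k move to one of the two points at distance e from x l. For a voter outside the
  e-neighbourhoods of the midpoints of all pairs of positions, the move towards the voter makes k
  the sole first-ranked candidate wherever l shared first place with weight 1/2, while k can be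
  ranked last only after the move away from the voter, and only where l shared last place. Summing
  over the two moves, k collects at least twice l's score up to an error O(e) coming from the
  neighbourhoods. Neither move is profitable in equilibrium, so v l \<le> v k + O(e); letting e tend
  to 0 and exchanging k and l gives equality.\<close>

lemma abs_dist_diff_ge:
  fixes a b y e :: real
  assumes "2 * e \<le> \<bar>a - b\<bar>" "y \<notin> {(a + b) / 2 - e .. (a + b) / 2 + e}"
  shows "2 * e \<le> \<bar>\<bar>a - y\<bar> - \<bar>b - y\<bar>\<bar>"
  using assms by (auto simp: abs_real_def field_simps split: if_splits)

lemma finite_set_separated:
  fixes A :: "real set"
  assumes "finite A"
  obtains d where "0 < d" "\<And>a b. a \<in> A \<Longrightarrow> b \<in> A \<Longrightarrow> a \<noteq> b \<Longrightarrow> d \<le> \<bar>a - b\<bar>"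
proof
  let ?D = "(\<lambda>(a, b). \<bar>a - b\<bar>) ` {(a, b) \<in> A \<times> A. a \<noteq> b}"
  have "finite ?D" using assms by (auto intro: finite_subset[of _ "A \<times> A"])
  then show "0 < Min (insert 1 ?D)" by auto
  show "Min (insert 1 ?D) \<le> \<bar>a - b\<bar>" if "a \<in> A" "b \<in> A" "a \<noteq> b" for a b
    using \<open>finite ?D\<close> that by (intro Min_le) auto
qed

lemma two_sided_moves:
  fixes p e :: real
  assumes "p \<in> {0..1}" "0 < e" "e \<le> 1/2"
  obtains t1 t2 where "t1 \<in> {0..1}" "t2 \<in> {0..1}" "\<bar>t1 - p\<bar> = e" "\<bar>t2 - p\<bar> = e"
    "\<And>y. y \<in> {0..1} \<Longrightarrow> e \<le> \<bar>y - p\<bar> \<Longrightarrow> \<bar>t1 - y\<bar> < \<bar>p - y\<bar> \<or> \<bar>t2 - y\<bar> < \<bar>p - y\<bar>"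
proof
  let ?t1 = "if 0 \<le> p - e then p - e else p + e" and ?t2 = "if p + e \<le> 1 then p + e else p - e"
  show "?t1 \<in> {0..1}" "?t2 \<in> {0..1}" "\<bar>?t1 - p\<bar> = e" "\<bar>?t2 - p\<bar> = e" using assms by auto
  show "\<bar>?t1 - y\<bar> < \<bar>p - y\<bar> \<or> \<bar>?t2 - y\<bar> < \<bar>p - y\<bar>" if "y \<in> {0..1}" "e \<le> \<bar>y - p\<bar>" for y
    using assms that by (auto simp: abs_real_def split: if_splits)
qed

lemma measure_Icc_neighbourhoods_le:
  fixes A :: "real set"
  assumes "finite A" "0 \<le> e"
  shows "measure lborel (\<Union>a\<in>A. {a - e .. a + e}) \<le> real (card A) * (2 * e)"
proof -
  have "measure lborel (\<Union>a\<in>A. {a - e .. a + e}) \<le> (\<Sum>a\<in>A. measure lborel {a - e .. a + e})"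
    using assms by (intro measure_UNION_le) auto
  also have "\<dots> = real (card A) * (2 * e)" using assms by simp
  finally show ?thesis .
qed

lemma set_integral_indicator_le_measure:
  assumes "B \<in> fmeasurable lborel" "S \<in> sets lborel"
  shows "(LINT y:S|lborel. indicator B y) \<le> measure lborel (B :: real set)"
proof -
  have "(LINT y:S|lborel. indicator B y) = measure lborel (S \<inter> B)"
    unfolding set_lebesgue_integral_def by (simp add: indicator_inter_arith[symmetric])
  also have "\<dots> \<le> measure lborel B"
    using assms by (intro measure_mono_fmeasurable) auto
  finally show ?thesis .
qed

definition first_share :: "nat \<Rightarrow> (nat \<Rightarrow> real) \<Rightarrow> nat \<Rightarrow> real \<Rightarrow> real" where
  "first_share m x i y = (if i \<in> closest m x y then 1 / real (card (closest m x y)) else 0)"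

definition last_share :: "nat \<Rightarrow> (nat \<Rightarrow> real) \<Rightarrow> nat \<Rightarrow> real \<Rightarrow> real" where
  "last_share m x i y = (if i \<in> farthest m x y then 1 / real (card (farthest m x y)) else 0)"

lemma bw_point_eq_shares: "bw_point c m x i y = first_share m x i y - c * last_share m x i y"
  unfolding bw_point_def first_share_def last_share_def ..

lemma finite_closest [simp]: "finite (closest m x y)"
  unfolding closest_def by simp

lemma finite_farthest [simp]: "finite (farthest m x y)"
  unfolding farthest_def by simp

lemma inverse_card_le_one: "finite A \<Longrightarrow> a \<in> A \<Longrightarrow> 1 / real (card A) \<le> 1"
  by (cases "card A") (auto simp: card_gt_0_iff)

lemma first_share_bounds: "0 \<le> first_share m x i y" "first_share m x i y \<le> 1"
  unfolding first_share_def by (auto intro: inverse_card_le_one)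

lemma last_share_bounds: "0 \<le> last_share m x i y" "last_share m x i y \<le> 1"
  unfolding last_share_def by (auto intro: inverse_card_le_one)

lemma bw_point_bounds:
  assumes "0 \<le> c"
  shows "- c \<le> bw_point c m x i y" "bw_point c m x i y \<le> 1"
proof -
  have "0 \<le> c * last_share m x i y" "c * last_share m x i y \<le> c"
    using last_share_bounds[of m x i y] assms by (auto intro: mult_left_le)
  then show "- c \<le> bw_point c m x i y" "bw_point c m x i y \<le> 1"
    unfolding bw_point_eq_shares using first_share_bounds[of m x i y] by linarith+
qed

lemma abs_bw_point_le: "\<bar>bw_point c m x i y\<bar> \<le> 1 + \<bar>c\<bar>"
proof -
  have "\<bar>c * last_share m x i y\<bar> \<le> \<bar>c\<bar>"
    using last_share_bounds by (simp add: abs_mult mult_left_le)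
  then show ?thesis unfolding bw_point_eq_shares using first_share_bounds[of m x i y] by linarith
qed

lemma first_share_eq_one:
  assumes "i < m" "\<forall>j<m. j \<noteq> i \<longrightarrow> \<bar>x i - y\<bar> < \<bar>x j - y\<bar>"
  shows "first_share m x i y = 1"
proof -
  have "closest m x y = {i}"
  proof (intro set_eqI iffI)
    fix j assume "j \<in> closest m x y"
    then show "j \<in> {i}" using assms unfolding closest_def by (cases "j = i") (auto simp: not_le[symmetric])
  next
    fix j assume "j \<in> {i}"
    then show "j \<in> closest m x y"
      using assms unfolding closest_def by (auto simp: less_imp_le)
  qed
  then show ?thesis unfolding first_share_def by simp
qed

lemma last_share_eq_zero:
  assumes "j < m" "\<bar>x i - y\<bar> < \<bar>x j - y\<bar>"
  shows "last_share m x i y = 0"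
  using assms unfolding last_share_def farthest_def by force

lemma first_share_colocated:
  assumes "n_at m x (x i) = n" "\<forall>j<m. x j \<noteq> x i \<longrightarrow> \<bar>x j - y\<bar> \<noteq> \<bar>x i - y\<bar>"
  shows "first_share m x i y = (if i \<in> closest m x y then 1 / real n else 0)"
proof (cases "i \<in> closest m x y")
  case True
  then have "closest m x y = {j. j < m \<and> x j = x i}"
  proof (intro set_eqI iffI)
    fix j assume "j \<in> closest m x y"
    with True have "j < m" "\<bar>x j - y\<bar> = \<bar>x i - y\<bar>" unfolding closest_def by force+
    with assms(2) show "j \<in> {j. j < m \<and> x j = x i}" by blast
  qed (use True in \<open>auto simp: closest_def\<close>)
  then show ?thesis using True assms(1) unfolding first_share_def n_at_def by simp
qed (simp add: first_share_def)

lemma last_share_colocated: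
  assumes "n_at m x (x i) = n" "\<forall>j<m. x j \<noteq> x i \<longrightarrow> \<bar>x j - y\<bar> \<noteq> \<bar>x i - y\<bar>"
  shows "last_share m x i y = (if i \<in> farthest m x y then 1 / real n else 0)"
proof (cases "i \<in> farthest m x y")
  case True
  then have "farthest m x y = {j. j < m \<and> x j = x i}"
  proof (intro set_eqI iffI)
    fix j assume "j \<in> farthest m x y"
    with True have "j < m" "\<bar>x j - y\<bar> = \<bar>x i - y\<bar>" unfolding farthest_def by force+
    with assms(2) show "j \<in> {j. j < m \<and> x j = x i}" by blast
  qed (use True in \<open>auto simp: farthest_def\<close>)
  then show ?thesis using True assms(1) unfolding last_share_def n_at_def by simp
qed (simp add: last_share_def)

lemma bw_point_measurable: "bw_point c m x i \<in> borel_measurable lborel"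
proof -
  define nearer where "nearer = (\<lambda>a b (y::real). \<bar>x a - y\<bar> \<le> \<bar>x b - y\<bar>)"
  have card_eq: "real (card {a. a < m \<and> (\<forall>b<m. P a b)}) = (\<Sum>a<m. if \<forall>b\<in>{..<m}. P a b then 1 else 0)"
    for P :: "nat \<Rightarrow> nat \<Rightarrow> bool"
    by (simp add: sum.If_cases Int_def conj_commute lessThan_def)
  have pred: "Measurable.pred lborel (\<lambda>y. \<forall>b\<in>{..<m}. nearer a b y)"
    "Measurable.pred lborel (\<lambda>y. \<forall>b\<in>{..<m}. nearer b a y)" for a
    unfolding nearer_def by (intro pred_intros_finite(3); simp; measurable)+
  have eq: "bw_point c m x i = (\<lambda>y.
      (if i < m \<and> (\<forall>b\<in>{..<m}. nearer i b y)
       then 1 / (\<Sum>a<m. if \<forall>b\<in>{..<m}. nearer a b y then 1 else 0) else 0)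
    - c * (if i < m \<and> (\<forall>b\<in>{..<m}. nearer b i y)
       then 1 / (\<Sum>a<m. if \<forall>b\<in>{..<m}. nearer b a y then 1 else 0) else 0))"
    unfolding bw_point_def closest_def farthest_def card_eq[symmetric] nearer_def by auto
  show ?thesis unfolding eq using pred by measurable
qed

lemma bw_point_set_integrable: "set_integrable lborel {0..1::real} (bw_point c m x i)"
  unfolding set_integrable_def
  by (rule integrableI_bounded_set_indicator[where B = "1 + \<bar>c\<bar>"])
     (use bw_point_measurable abs_bw_point_le in auto)

lemma first_share_move_closer:
  assumes "k < m" "k \<noteq> l" "l \<in> closest m x y" "\<bar>t - y\<bar> < \<bar>x l - y\<bar>"
  shows "first_share m (x(k := t)) k y = 1"
proof (rule first_share_eq_one)
  show "\<forall>j<m. j \<noteq> k \<longrightarrow> \<bar>(x(k := t)) k - y\<bar> < \<bar>(x(k := t)) j - y\<bar>"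
  proof (intro allI impI)
    fix j assume "j < m" "j \<noteq> k"
    with assms(3) have "\<bar>x l - y\<bar> \<le> \<bar>x j - y\<bar>" unfolding closest_def by blast
    with assms(4) \<open>j \<noteq> k\<close> show "\<bar>(x(k := t)) k - y\<bar> < \<bar>(x(k := t)) j - y\<bar>" by simp
  qed
qed fact

lemma last_share_move_near:
  assumes "k < m" "k' < m" "k' \<noteq> k" "x k' = x k" "l < m" "k \<noteq> l"
    and near: "\<bar>t - x l\<bar> \<le> e" "\<bar>t - y\<bar> \<noteq> \<bar>x l - y\<bar>"
    and sep: "\<forall>j<m. x j \<noteq> x l \<longrightarrow> 2 * e \<le> \<bar>\<bar>x j - y\<bar> - \<bar>x l - y\<bar>\<bar>"
    and not_last: "\<not> (l \<in> farthest m x y \<and> \<bar>x l - y\<bar> < \<bar>t - y\<bar>)"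
  shows "last_share m (x(k := t)) k y = 0"
proof (cases "l \<in> farthest m x y")
  case True
  with not_last near(2) have "\<bar>t - y\<bar> < \<bar>x l - y\<bar>" by linarith
  with \<open>l < m\<close> \<open>k \<noteq> l\<close> show ?thesis by (intro last_share_eq_zero[of l]) auto
next
  case False
  then obtain j where j: "j < m" "\<bar>x l - y\<bar> < \<bar>x j - y\<bar>"
    using \<open>l < m\<close> unfolding farthest_def by (auto simp: not_le)
  with sep have "2 * e \<le> \<bar>\<bar>x j - y\<bar> - \<bar>x l - y\<bar>\<bar>" by (metis less_irrefl)
  with j(2) near have farther: "\<bar>t - y\<bar> < \<bar>x j - y\<bar>" by linarith
  show ?thesis
  proof (cases "j = k")
    case True
    \<comment> \<open>k left the farther position, but its twin k' is still there.\<close>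
    with farther assms(2-4) show ?thesis by (intro last_share_eq_zero[of k']) auto
  next
    case False
    with farther j(1) show ?thesis by (intro last_share_eq_zero[of j]) auto
  qed
qed

lemma twin_moves_pointwise:
  assumes c: "0 \<le> c"
    and k: "k < m" "k' < m" "k' \<noteq> k" "x k' = x k"
    and l: "l < m" "x k \<noteq> x l" "n_at m x (x l) = 2"
    and e: "0 < e" "\<bar>t1 - x l\<bar> = e" "\<bar>t2 - x l\<bar> = e" "e < \<bar>y - x l\<bar>"
    and sep: "\<forall>i<m. \<forall>j<m. x i \<noteq> x j \<longrightarrow> 2 * e \<le> \<bar>\<bar>x i - y\<bar> - \<bar>x j - y\<bar>\<bar>"
    and closer: "\<bar>t1 - y\<bar> < \<bar>x l - y\<bar> \<or> \<bar>t2 - y\<bar> < \<bar>x l - y\<bar>"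
  shows "2 * bw_point c m x l y \<le> bw_point c m (x(k := t1)) k y + bw_point c m (x(k := t2)) k y"
proof -
  have "k \<noteq> l" using l(2) by auto
  have sep_l: "\<forall>j<m. x j \<noteq> x l \<longrightarrow> 2 * e \<le> \<bar>\<bar>x j - y\<bar> - \<bar>x l - y\<bar>\<bar>"
    using sep l(1) by blast
  have no_tie: "\<forall>j<m. x j \<noteq> x l \<longrightarrow> \<bar>x j - y\<bar> \<noteq> \<bar>x l - y\<bar>"
  proof (intro allI impI)
    fix j assume "j < m" "x j \<noteq> x l"
    with sep_l have "2 * e \<le> \<bar>\<bar>x j - y\<bar> - \<bar>x l - y\<bar>\<bar>" by blast
    with e(1) show "\<bar>x j - y\<bar> \<noteq> \<bar>x l - y\<bar>" by auto
  qed
  have no_tie_moves: "\<bar>t1 - y\<bar> \<noteq> \<bar>x l - y\<bar>" "\<bar>t2 - y\<bar> \<noteq> \<bar>x l - y\<bar>"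
    using e by linarith+
  have first: "2 * first_share m x l y \<le> first_share m (x(k := t1)) k y + first_share m (x(k := t2)) k y"
  proof (cases "l \<in> closest m x y")
    case True
    with closer first_share_move_closer[OF k(1) \<open>k \<noteq> l\<close> True]
    have "first_share m (x(k := t1)) k y = 1 \<or> first_share m (x(k := t2)) k y = 1" by blast
    moreover have "first_share m x l y = 1 / 2"
      using first_share_colocated[OF l(3) no_tie] True by simp
    ultimately show ?thesis
      using first_share_bounds[of m "x(k := t1)" k y] first_share_bounds[of m "x(k := t2)" k y] by auto
  next
    case False
    then have "first_share m x l y = 0" unfolding first_share_def by simp
    then show ?thesis
      using first_share_bounds[of m "x(k := t1)" k y] first_share_bounds[of m "x(k := t2)" k y] by simp
  qed
  have last_move: "last_share m (x(k := t)) k y = 0"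
    if "\<bar>t - x l\<bar> = e" "\<bar>t - y\<bar> \<noteq> \<bar>x l - y\<bar>" "\<not> (l \<in> farthest m x y \<and> \<bar>x l - y\<bar> < \<bar>t - y\<bar>)" for t
    using that by (intro last_share_move_near[OF k l(1) \<open>k \<noteq> l\<close> _ _ sep_l]) auto
  have last: "last_share m (x(k := t1)) k y + last_share m (x(k := t2)) k y \<le> 2 * last_share m x l y"
  proof (cases "l \<in> farthest m x y")
    case True
    then have "last_share m x l y = 1 / 2"
      using last_share_colocated[OF l(3) no_tie] by simp
    moreover have "last_share m (x(k := t1)) k y = 0 \<or> last_share m (x(k := t2)) k y = 0"
      using closer last_move[OF e(2) no_tie_moves(1)] last_move[OF e(3) no_tie_moves(2)] by linarith
    ultimately show ?thesis
      using last_share_bounds[of m "x(k := t1)" k y] last_share_bounds[of m "x(k := t2)" k y] by auto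
  next
    case False
    then show ?thesis
      using last_move[OF e(2) no_tie_moves(1)] last_move[OF e(3) no_tie_moves(2)] last_share_bounds by simp
  qed
  from last c have "c * (last_share m (x(k := t1)) k y + last_share m (x(k := t2)) k y)
      \<le> c * (2 * last_share m x l y)" by (rule mult_left_mono)
  with first show ?thesis unfolding bw_point_eq_shares by (simp add: algebra_simps)
qed

lemma obtain_colocated:
  assumes "k < m" "2 \<le> n_at m x (x k)"
  obtains k' where "k' < m" "k' \<noteq> k" "x k' = x k"
proof -
  have "\<not> {j. j < m \<and> x j = x k} \<subseteq> {k}"
    using assms(2) card_mono[of "{k}" "{j. j < m \<and> x j = x k}"] unfolding n_at_def by auto
  then show ?thesis using that by blast
qed

lemma bw_score_colocated:
  assumes "k < m" "l < m" "x k = x l"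
  shows "bw_score c m x k = bw_score c m x l"
proof -
  have "bw_point c m x k = bw_point c m x l"
    using assms unfolding bw_point_def closest_def farthest_def by (intro ext) simp
  then show ?thesis unfolding bw_score_def by simp
qed

definition midpoint_nbhd :: "nat \<Rightarrow> (nat \<Rightarrow> real) \<Rightarrow> real \<Rightarrow> real set" where
  "midpoint_nbhd m x e = (\<Union>a\<in>(\<lambda>(i, j). (x i + x j) / 2) ` ({..<m} \<times> {..<m}). {a - e .. a + e})"

lemma midpoint_nbhd_fmeasurable: "midpoint_nbhd m x e \<in> fmeasurable lborel"
  unfolding midpoint_nbhd_def by (intro fmeasurable_compact compact_UN) auto

lemma set_integral_midpoint_nbhd_le:
  assumes "0 \<le> e"
  shows "(LINT y:{0..1}|lborel. indicator (midpoint_nbhd m x e) y) \<le> real (m * m) * (2 * e)"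
proof -
  let ?mids = "(\<lambda>(i, j). (x i + x j) / 2) ` ({..<m} \<times> {..<m})"
  have "card ?mids \<le> m * m"
    by (metis card_image_le card_cartesian_product card_lessThan finite_cartesian_product finite_lessThan)
  then have "real (card ?mids) * (2 * e) \<le> real (m * m) * (2 * e)"
    using assms by (intro mult_right_mono) (simp only: of_nat_le_iff)+
  with measure_Icc_neighbourhoods_le[of ?mids e] assms
  have "measure lborel (midpoint_nbhd m x e) \<le> real (m * m) * (2 * e)"
    unfolding midpoint_nbhd_def by simp
  with set_integral_indicator_le_measure[OF midpoint_nbhd_fmeasurable[of m x e], of "{0..1}"]
  show ?thesis by simp
qed

lemma dist_gt_off_midpoint_nbhd:
  assumes "l < m" "y \<notin> midpoint_nbhd m x e"
  shows "e < \<bar>y - x l\<bar>"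
proof -
  have "x l \<in> (\<lambda>(i, j). (x i + x j) / 2) ` ({..<m} \<times> {..<m})"
    using assms(1) by (auto intro!: image_eqI[of _ _ "(l, l)"])
  with assms(2) have "y \<notin> {x l - e .. x l + e}" unfolding midpoint_nbhd_def by blast
  then show ?thesis by auto
qed

lemma separated_off_midpoint_nbhd:
  assumes "y \<notin> midpoint_nbhd m x e" "\<forall>i<m. \<forall>j<m. x i \<noteq> x j \<longrightarrow> 2 * e \<le> \<bar>x i - x j\<bar>"
  shows "\<forall>i<m. \<forall>j<m. x i \<noteq> x j \<longrightarrow> 2 * e \<le> \<bar>\<bar>x i - y\<bar> - \<bar>x j - y\<bar>\<bar>"
proof (intro allI impI)
  fix i j assume "i < m" "j < m" "x i \<noteq> x j"
  moreover from this assms(1) have "y \<notin> {(x i + x j) / 2 - e .. (x i + x j) / 2 + e}"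
    unfolding midpoint_nbhd_def by blast
  ultimately show "2 * e \<le> \<bar>\<bar>x i - y\<bar> - \<bar>x j - y\<bar>\<bar>" using assms(2) abs_dist_diff_ge by blast
qed

lemma twin_moves_pointwise_with_error:
  assumes c: "0 \<le> c"
    and k: "k < m" "k' < m" "k' \<noteq> k" "x k' = x k"
    and l: "l < m" "x k \<noteq> x l" "n_at m x (x l) = 2"
    and e: "0 < e" "\<bar>t1 - x l\<bar> = e" "\<bar>t2 - x l\<bar> = e"
    and sep: "\<forall>i<m. \<forall>j<m. x i \<noteq> x j \<longrightarrow> 2 * e \<le> \<bar>x i - x j\<bar>"
    and closer: "e \<le> \<bar>y - x l\<bar> \<Longrightarrow> \<bar>t1 - y\<bar> < \<bar>x l - y\<bar> \<or> \<bar>t2 - y\<bar> < \<bar>x l - y\<bar>"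
  shows "2 * bw_point c m x l y \<le> bw_point c m (x(k := t1)) k y + bw_point c m (x(k := t2)) k y
    + (2 + 2 * c) * indicator (midpoint_nbhd m x e) y"
proof (cases "y \<in> midpoint_nbhd m x e")
  case True
  then show ?thesis
    using bw_point_bounds[OF c, of m x l y] bw_point_bounds[OF c, of m "x(k := t1)" k y]
      bw_point_bounds[OF c, of m "x(k := t2)" k y] by simp
next
  case False
  with dist_gt_off_midpoint_nbhd[OF l(1)] separated_off_midpoint_nbhd[OF _ sep] closer
    twin_moves_pointwise[OF c k l e]
  show ?thesis by fastforce
qed

lemma bw_score_le_with_error:
  assumes c: "0 \<le> c" and eq: "nash_eq c m x"
    and k: "k < m" "2 \<le> n_at m x (x k)"
    and l: "l < m" "x k \<noteq> x l" "n_at m x (x l) = 2"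
    and e: "0 < e" "e \<le> 1/2"
    and sep: "\<forall>i<m. \<forall>j<m. x i \<noteq> x j \<longrightarrow> 2 * e \<le> \<bar>x i - x j\<bar>"
  shows "bw_score c m x l \<le> bw_score c m x k + (1 + c) * (real (m * m) * (2 * e))"
proof -
  obtain k' where k': "k' < m" "k' \<noteq> k" "x k' = x k"
    using obtain_colocated[OF k] .
  have "x l \<in> {0..1}" using eq l(1) unfolding nash_eq_def is_profile_def by blast
  then obtain t1 t2 where t: "t1 \<in> {0..1}" "t2 \<in> {0..1}" "\<bar>t1 - x l\<bar> = e" "\<bar>t2 - x l\<bar> = e"
    and closer: "\<And>y. y \<in> {0..1} \<Longrightarrow> e \<le> \<bar>y - x l\<bar> \<Longrightarrow> \<bar>t1 - y\<bar> < \<bar>x l - y\<bar> \<or> \<bar>t2 - y\<bar> < \<bar>x l - y\<bar>"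
    using two_sided_moves[OF _ e] by blast
  let ?f = "\<lambda>t y. bw_point c m (x(k := t)) k y" and ?B = "midpoint_nbhd m x e"
  have indicator_B: "set_integrable lborel {0..1::real} (indicator ?B :: real \<Rightarrow> real)"
    unfolding set_integrable_def using midpoint_nbhd_fmeasurable
    by (intro integrableI_bounded_set_indicator[where B = 1]) (auto simp: indicator_def)
  have moves: "bw_score c m (x(k := t)) k \<le> bw_score c m x k" if "t \<in> {0..1}" for t
    using eq k(1) that unfolding nash_eq_def by blast
  have "2 * bw_score c m x l = (LINT y:{0..1}|lborel. 2 * bw_point c m x l y)"
    unfolding bw_score_def by simp
  also have "\<dots> \<le> (LINT y:{0..1}|lborel. ?f t1 y + ?f t2 y + (2 + 2 * c) * indicator ?B y)"
    using twin_moves_pointwise_with_error[OF c k(1) k' l e(1) t(3,4) sep closer]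
      bw_point_set_integrable indicator_B
    by (intro set_integral_mono) auto
  also have "\<dots> = bw_score c m (x(k := t1)) k + bw_score c m (x(k := t2)) k
      + (2 + 2 * c) * (LINT y:{0..1}|lborel. indicator ?B y)"
    unfolding bw_score_def using bw_point_set_integrable indicator_B by (simp add: set_integral_add)
  also have "\<dots> \<le> 2 * bw_score c m x k + (2 + 2 * c) * (real (m * m) * (2 * e))"
    using moves[OF t(1)] moves[OF t(2)] set_integral_midpoint_nbhd_le[of e m x] e(1) c
    by (smt (verit) mult_left_mono)
  finally show ?thesis by (simp add: algebra_simps)
qed

lemma bw_score_le_if_twins:
  assumes c: "0 \<le> c" and eq: "nash_eq c m x"
    and k: "k < m" "2 \<le> n_at m x (x k)"
    and l: "l < m" "x k \<noteq> x l" "n_at m x (x l) = 2"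
  shows "bw_score c m x l \<le> bw_score c m x k"
proof -
  obtain d where d: "0 < d" "\<And>a b. a \<in> x ` {..<m} \<Longrightarrow> b \<in> x ` {..<m} \<Longrightarrow> a \<noteq> b \<Longrightarrow> d \<le> \<bar>a - b\<bar>"
    using finite_set_separated[of "x ` {..<m}"] by blast
  define C where "C = (1 + c) * (real (m * m) * 2)"
  have "0 < C" unfolding C_def using c k(1) by simp
  show ?thesis
  proof (rule field_le_epsilon)
    fix \<epsilon> :: real assume "0 < \<epsilon>"
    define e where "e = min (min (d / 2) (1 / 2)) (\<epsilon> / C)"
    have "e \<le> min (d / 2) (1 / 2)" unfolding e_def by (rule min.cobounded1)
    then have e: "0 < e" "e \<le> 1/2" "2 * e \<le> d"
      using d(1) \<open>0 < \<epsilon>\<close> \<open>0 < C\<close> unfolding e_def by auto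
    have "C * e \<le> C * (\<epsilon> / C)"
      unfolding e_def using \<open>0 < C\<close> by (intro mult_left_mono) auto
    then have "C * e \<le> \<epsilon>" using \<open>0 < C\<close> by simp
    have "\<forall>i<m. \<forall>j<m. x i \<noteq> x j \<longrightarrow> 2 * e \<le> \<bar>x i - x j\<bar>"
      using d(2) e(3) by fastforce
    from bw_score_le_with_error[OF c eq k l e(1,2) this]
    have "bw_score c m x l \<le> bw_score c m x k + C * e" unfolding C_def by (simp add: algebra_simps)
    with \<open>C * e \<le> \<epsilon>\<close> show "bw_score c m x l \<le> bw_score c m x k + \<epsilon>" by linarith
  qed
qed

theorem lemma3:
  fixes c :: real and m :: nat and x :: "nat \<Rightarrow> real" and k l :: nat
  assumes "c \<ge> 0" and "m \<ge> 2"
    and "nash_eq c m x" and "non_convergent m x"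
    and "k < m" and "l < m"
    and "n_at m x (x k) = 2" and "n_at m x (x l) = 2"
  shows "bw_score c m x k = bw_score c m x l"
proof (cases "x k = x l")
  case True
  with assms(5,6) show ?thesis by (rule bw_score_colocated)
next
  case False
  with assms(1,3,5-8) show ?thesis
    by (intro antisym bw_score_le_if_twins) auto
qed

end
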